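(* Let $X$ be a real Banach space and let $C\subseteq B_{X^*}$ be a nonempty convex $w^*$-compact set such that every convex combination of slices of $C$ has diameter $2$. Then $K=\mathrm{co}(C\cup(-C))$ is a $w^*$-compact convex subset of $B_{X^*}$ such that every convex combination of slices of $K$ has diameter $2$.
   Context: For a bounded set $A$ in a Banach space $Z$ (here $Z=X^*$), a slice of $A$ is a nonempty set of the form $S(A,\phi,\alpha)=\{a\in A: \phi(a)>\sup_A\phi-\alpha\}$ with $\phi\in Z^*\setminus\{0\}$ and $\alpha>0$. A convex combination of slices of $A$ is a Minkowski sum $\sum_{i=1}^n\lambda_iS_i=\{\sum_i\lambda_is_i: s_i\in S_i\}$ where $S_i$ are slices of $A$, $\lambda_i>0$ and $\sum_i\lambda_i=1$. $\mathrm{co}$ denotes the convex hull. *)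

theory Defs
  imports "HOL-Analysis.Analysis"
begin

text \<open>The dual space X* of a real Banach space X is modelled as the type
  of bounded linear functionals 'a \<Rightarrow>L real.\<close>

definition weak_star_topology :: "('a::real_normed_vector \<Rightarrow>\<^sub>L real) topology" where
  "weak_star_topology =
     topology_generated_by {{f. blinfun_apply f x \<in> U} | x U. open (U :: real set)}"

definition slice :: "'b::real_normed_vector set \<Rightarrow> ('b \<Rightarrow>\<^sub>L real) \<Rightarrow> real \<Rightarrow> 'b set" where
  "slice A \<phi> \<alpha> = {a \<in> A. blinfun_apply \<phi> a > (SUP b\<in>A. blinfun_apply \<phi> b) - \<alpha>}"

definition is_slice :: "'b::real_normed_vector set \<Rightarrow> 'b set \<Rightarrow> bool" where
  "is_slice A S \<longleftrightarrow>
     (\<exists>\<phi> \<alpha>. \<phi> \<noteq> 0 \<and> \<alpha> > 0 \<and> S = slice A \<phi> \<alpha> \<and> S \<noteq> {})"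

definition conv_comb_slices :: "'b::real_normed_vector set \<Rightarrow> 'b set set" where
  "conv_comb_slices A =
     {D. \<exists>n::nat. \<exists>c S. n \<ge> 1 \<and> (\<forall>i<n. c i > 0 \<and> is_slice A (S i)) \<and>
          (\<Sum>i<n. c i) = 1 \<and>
          D = {(\<Sum>i<n. c i *\<^sub>R s i) | s. \<forall>i<n. s i \<in> S i}}"

end

theory Submission
  imports Defs
begin

text \<open>Write K for the convex hull of C and -C. Being the image of C \<times> C \<times> [0,1] under
  (f, g, u) \<mapsto> (1 - u) f - u g, which is weak-star continuous, K is weak-star compact.
  The supremum of a functional \<phi> over K is the larger of its suprema over C and -C, so every slice
  of K contains e S' for a slice S' of C and a sign e = \<plusminus>1. Hence for every convex combination
  \<Sum> c_i S_i of slices of K there is a convex combination \<Sum> c_i S'_i of slices of C with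
  e_i S'_i \<subseteq> S_i; exchanging the i-th summands of two points of the latter wherever e_i = -1
  does not change their difference, so the diameter of the former is at least that of the latter,
  namely 2.\<close>

lemma convex_hull_Un_eq_image:
  fixes S T :: "'a::real_vector set"
  assumes "convex S" "S \<noteq> {}" "convex T" "T \<noteq> {}"
  shows "convex hull (S \<union> T) = (\<lambda>(s, t, u). (1 - u) *\<^sub>R s + u *\<^sub>R t) ` (S \<times> T \<times> {0..1})"
proof -
  define A where "A b = (if b then T else S)" for b
  let ?comb = "{\<Sum>b\<in>UNIV. c b *\<^sub>R a b | c a.
    (\<forall>b\<in>UNIV. c b \<ge> 0) \<and> sum c UNIV = 1 \<and> (\<forall>b\<in>UNIV. a b \<in> A b)}"
  have "S \<union> T = \<Union>(A ` UNIV)"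
    by (auto simp: A_def)
  moreover have "convex hull (\<Union>(A ` UNIV)) = ?comb"
    using assms by (intro convex_hull_finite_union) (auto simp: A_def)
  ultimately have "convex hull (S \<union> T) = ?comb"
    by simp
  also have "\<dots> = (\<lambda>(s, t, u). (1 - u) *\<^sub>R s + u *\<^sub>R t) ` (S \<times> T \<times> {0..1})"
  proof (intro set_eqI iffI)
    fix x assume "x \<in> ?comb"
    then obtain c a where c: "\<forall>b. c b \<ge> 0" "sum c UNIV = 1" and a: "\<forall>b. a b \<in> A b"
      and x: "x = (\<Sum>b\<in>UNIV. c b *\<^sub>R a b)"
      by blast
    have "a False \<in> S" "a True \<in> T"
      using a[rule_format, of False] a[rule_format, of True] by (simp_all add: A_def)
    moreover have "c True \<in> {0..1}" "c False = 1 - c True"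
      using c(1)[rule_format, of False] c(1)[rule_format, of True] c(2) by (simp_all add: UNIV_bool)
    moreover have "x = c False *\<^sub>R a False + c True *\<^sub>R a True"
      using x by (simp add: UNIV_bool)
    ultimately show "x \<in> (\<lambda>(s, t, u). (1 - u) *\<^sub>R s + u *\<^sub>R t) ` (S \<times> T \<times> {0..1})"
      by (intro image_eqI[of _ _ "(a False, a True, c True)"]) auto
  next
    fix x assume "x \<in> (\<lambda>(s, t, u). (1 - u) *\<^sub>R s + u *\<^sub>R t) ` (S \<times> T \<times> {0..1})"
    then obtain s t u where "s \<in> S" "t \<in> T" "u \<in> {0..1}" "x = (1 - u) *\<^sub>R s + u *\<^sub>R t"
      by auto
    then show "x \<in> ?comb"
      by (intro CollectI exI[of _ "\<lambda>b. if b then u else 1 - u"]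
          exI[of _ "\<lambda>b. if b then t else s"])
        (auto simp: A_def UNIV_bool)
  qed
  finally show ?thesis .
qed

lemma topspace_weak_star_topology [simp]: "topspace weak_star_topology = UNIV"
  unfolding weak_star_topology_def topology_generated_by_topspace
  by (auto intro!: exI[of _ 0] exI[of _ UNIV])

lemma continuous_map_weak_star_eval:
  "continuous_map weak_star_topology euclideanreal (\<lambda>f. blinfun_apply f x)"
  unfolding continuous_map_def topspace_weak_star_topology
proof (intro conjI allI impI)
  fix U :: "real set"
  assume "openin euclideanreal U"
  then show "openin weak_star_topology {f \<in> UNIV. blinfun_apply f x \<in> U}"
    unfolding weak_star_topology_def by (intro topology_generated_by_Basis) auto
qed auto

lemma continuous_map_into_weak_star_iff:
  fixes g :: "'b \<Rightarrow> ('a::real_normed_vector \<Rightarrow>\<^sub>L real)"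
  shows "continuous_map X weak_star_topology g \<longleftrightarrow>
     (\<forall>x. continuous_map X euclideanreal (\<lambda>p. blinfun_apply (g p) x))"
proof
  show "\<forall>x. continuous_map X euclideanreal (\<lambda>p. blinfun_apply (g p) x)"
    if "continuous_map X weak_star_topology g"
    using continuous_map_compose[OF that continuous_map_weak_star_eval] by (simp add: o_def)
next
  assume ev: "\<forall>x. continuous_map X euclideanreal (\<lambda>p. blinfun_apply (g p) x)"
  show "continuous_map X weak_star_topology g"
    unfolding weak_star_topology_def
  proof (rule continuous_on_generated_topo)
    fix W :: "('a \<Rightarrow>\<^sub>L real) set"
    assume "W \<in> {{f. blinfun_apply f x \<in> U} |x U. open (U :: real set)}"
    then obtain x U where "W = {f. blinfun_apply f x \<in> U}" "open U" by blast
    then show "openin X (g -` W \<inter> topspace X)"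
      using openin_continuous_map_preimage[of X euclideanreal "\<lambda>p. g p x" U] ev
      by (simp add: Int_commute Collect_conj_eq vimage_def)
  qed (auto intro!: exI[of _ 0] exI[of _ UNIV])
qed

lemma compactin_weak_star_uminus:
  fixes C :: "('a::real_normed_vector \<Rightarrow>\<^sub>L real) set"
  assumes "compactin weak_star_topology C"
  shows "compactin weak_star_topology (uminus ` C)"
proof (rule image_compactin[OF assms])
  show "continuous_map weak_star_topology weak_star_topology (uminus :: ('a \<Rightarrow>\<^sub>L real) \<Rightarrow> _)"
    by (simp add: continuous_map_into_weak_star_iff continuous_map_minus
        continuous_map_weak_star_eval uminus_blinfun.rep_eq)
qed

lemma compactin_weak_star_convex_hull_Un:
  fixes S T :: "('a::real_normed_vector \<Rightarrow>\<^sub>L real) set"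
  assumes "convex S" "S \<noteq> {}" "compactin weak_star_topology S"
    and "convex T" "T \<noteq> {}" "compactin weak_star_topology T"
  shows "compactin weak_star_topology (convex hull (S \<union> T))"
proof -
  let ?X = "prod_topology weak_star_topology (prod_topology weak_star_topology euclideanreal)"
  let ?g = "\<lambda>(s, t, u). (1 - u) *\<^sub>R s + u *\<^sub>R t :: 'a \<Rightarrow>\<^sub>L real"
  have "compactin ?X (S \<times> T \<times> {0..1})"
    using assms by (simp add: compactin_Times)
  moreover have "continuous_map ?X weak_star_topology ?g"
  proof (clarsimp simp: continuous_map_into_weak_star_iff case_prod_unfold
      blinfun.add_left blinfun.scaleR_left)
    fix x :: 'a
    have "continuous_map ?X euclideanreal (\<lambda>p. blinfun_apply (fst p) x)"
      using continuous_map_compose[OF continuous_map_fst continuous_map_weak_star_eval]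
      by (simp add: o_def)
    moreover have "continuous_map ?X euclideanreal (\<lambda>p. blinfun_apply (fst (snd p)) x)"
      using continuous_map_compose[OF continuous_map_compose[OF continuous_map_snd continuous_map_fst]
          continuous_map_weak_star_eval]
      by (simp add: o_def)
    moreover have "continuous_map ?X euclideanreal (\<lambda>p. snd (snd p))"
      using continuous_map_compose[OF continuous_map_snd continuous_map_snd] by (simp add: o_def)
    ultimately show "continuous_map ?X euclideanreal (\<lambda>p.
        (1 - snd (snd p)) * blinfun_apply (fst p) x + snd (snd p) * blinfun_apply (fst (snd p)) x)"
      by (intro continuous_map_add continuous_map_real_mult continuous_map_diff) auto
  qed
  ultimately show ?thesis
    using image_compactin convex_hull_Un_eq_image[OF assms(1,2,4,5)] by fastforce
qed

lemma bdd_above_blinfun_image: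
  fixes A :: "'a::real_normed_vector set" and \<phi> :: "'a \<Rightarrow>\<^sub>L real"
  assumes "bounded A"
  shows "bdd_above (blinfun_apply \<phi> ` A)"
proof -
  have "bounded (blinfun_apply \<phi> ` A)"
    using assms blinfun.bounded_linear_right by (rule bounded_linear_image)
  then show ?thesis
    by (rule bounded_imp_bdd_above)
qed

lemma is_slice_slice:
  fixes \<phi> :: "'a::real_normed_vector \<Rightarrow>\<^sub>L real"
  assumes "A \<noteq> {}" "bdd_above (blinfun_apply \<phi> ` A)" "\<phi> \<noteq> 0" "\<alpha> > 0"
  shows "is_slice A (slice A \<phi> \<alpha>)"
proof -
  obtain a where "a \<in> A" "(SUP b\<in>A. \<phi> b) - \<alpha> < \<phi> a"
    using less_cSUP_iff[OF assms(1,2), of "(SUP b\<in>A. \<phi> b) - \<alpha>"] assms(4) by auto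
  then have "slice A \<phi> \<alpha> \<noteq> {}"
    by (auto simp: slice_def)
  then show ?thesis
    using assms(3,4) by (auto simp: is_slice_def)
qed

lemma SUP_blinfun_convex_hull:
  fixes A :: "'a::real_normed_vector set" and \<phi> :: "'a \<Rightarrow>\<^sub>L real"
  assumes "A \<noteq> {}" "bounded A"
  shows "(SUP x\<in>convex hull A. \<phi> x) = (SUP x\<in>A. \<phi> x)"
proof (rule antisym)
  have "convex hull A \<subseteq> blinfun_apply \<phi> -` {..SUP x\<in>A. \<phi> x}"
    using assms by (intro hull_minimal convex_linear_vimage)
      (auto intro!: cSUP_upper bdd_above_blinfun_image
        bounded_linear.linear[OF blinfun.bounded_linear_right])
  then show "(SUP x\<in>convex hull A. \<phi> x) \<le> (SUP x\<in>A. \<phi> x)"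
    using assms(1) by (auto intro!: cSUP_least)
  show "(SUP x\<in>A. \<phi> x) \<le> (SUP x\<in>convex hull A. \<phi> x)"
    using assms by (intro cSUP_subset_mono bdd_above_blinfun_image bounded_convex_hull hull_subset) auto
qed

lemma signed_slice_subset_slice_convex_hull_Un_negations:
  fixes C :: "'a::real_normed_vector set"
  assumes "bounded C" "is_slice (convex hull (C \<union> uminus ` C)) S"
  shows "\<exists>S' e. is_slice C S' \<and> (e = 1 \<or> e = -1) \<and> (*\<^sub>R) e ` S' \<subseteq> S"
proof -
  let ?K = "convex hull (C \<union> uminus ` C)"
  obtain \<phi> \<alpha> where "\<phi> \<noteq> 0" "\<alpha> > 0" "S = slice ?K \<phi> \<alpha>" "S \<noteq> {}"
    using assms(2) unfolding is_slice_def by blast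
  then have "C \<noteq> {}"
    by (auto simp: slice_def)
  have "bounded (C \<union> uminus ` C)"
    using assms(1) by simp
  then have "(SUP k\<in>?K. \<phi> k) = (SUP k\<in>C \<union> uminus ` C. \<phi> k)"
    using \<open>C \<noteq> {}\<close> by (simp add: SUP_blinfun_convex_hull)
  also have "\<dots> = max (SUP c\<in>C. \<phi> c) (SUP c\<in>C. \<phi> (- c))"
    using \<open>C \<noteq> {}\<close> assms(1) bdd_above_blinfun_image[of C \<phi>]
      bdd_above_blinfun_image[of "uminus ` C" \<phi>]
    by (subst cSUP_union) (auto simp: image_image sup_max)
  finally have sup_K: "(SUP k\<in>?K. \<phi> k) = max (SUP c\<in>C. \<phi> c) (SUP c\<in>C. \<phi> (- c))" .
  obtain e :: real where e: "e = 1 \<or> e = -1" "(SUP k\<in>?K. \<phi> k) = (SUP c\<in>C. (e *\<^sub>R \<phi>) c)"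
  proof (cases "(SUP c\<in>C. \<phi> (- c)) \<le> (SUP c\<in>C. \<phi> c)")
    case True
    then show ?thesis
      using that[of 1] sup_K by simp
  next
    case False
    then show ?thesis
      using that[of "-1"] sup_K by (simp add: blinfun.minus_right uminus_blinfun.rep_eq)
  qed
  have "e *\<^sub>R c \<in> ?K" if "c \<in> C" for c
    using e(1) that by (auto intro: hull_inc)
  then have "(*\<^sub>R) e ` slice C (e *\<^sub>R \<phi>) \<alpha> \<subseteq> S"
    using \<open>S = slice ?K \<phi> \<alpha>\<close> e(2)
    by (auto simp: slice_def blinfun.scaleR_right scaleR_blinfun.rep_eq)
  moreover have "is_slice C (slice C (e *\<^sub>R \<phi>) \<alpha>)"
    using \<open>C \<noteq> {}\<close> \<open>\<phi> \<noteq> 0\<close> \<open>\<alpha> > 0\<close> e(1)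
    by (intro is_slice_slice bdd_above_blinfun_image assms(1)) auto
  ultimately show ?thesis
    using e(1) by blast
qed

definition minkowski_comb ::
    "nat \<Rightarrow> (nat \<Rightarrow> real) \<Rightarrow> (nat \<Rightarrow> 'a::real_vector set) \<Rightarrow> 'a set" where
  "minkowski_comb n c S = {\<Sum>i<n. c i *\<^sub>R s i | s. \<forall>i<n. s i \<in> S i}"

lemma conv_comb_slices_eq:
  "conv_comb_slices A = {minkowski_comb n c S | n c S.
     n \<ge> 1 \<and> (\<forall>i<n. c i > 0 \<and> is_slice A (S i)) \<and> (\<Sum>i<n. c i) = 1}"
  unfolding conv_comb_slices_def minkowski_comb_def by blast

lemma is_slice_subset: "is_slice A S \<Longrightarrow> S \<subseteq> A"
  by (auto simp: is_slice_def slice_def)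

lemma minkowski_comb_subset_convex:
  assumes "convex A" "\<forall>i<n. c i \<ge> 0" "(\<Sum>i<n. c i) = 1" "\<forall>i<n. S i \<subseteq> A"
  shows "minkowski_comb n c S \<subseteq> A"
proof
  fix x
  assume "x \<in> minkowski_comb n c S"
  then obtain s where x: "x = (\<Sum>i<n. c i *\<^sub>R s i)" and s: "\<forall>i<n. s i \<in> S i"
    unfolding minkowski_comb_def by blast
  show "x \<in> A"
    unfolding x using assms s by (intro convex_sum) auto
qed

lemma conv_comb_slices_subset_convex:
  assumes "convex A" "D \<in> conv_comb_slices A"
  shows "D \<subseteq> A"
proof -
  obtain n c S where c: "\<forall>i<n. c i > 0 \<and> is_slice A (S i)" "(\<Sum>i<n. c i) = 1"
    and D: "D = minkowski_comb n c S"
    using assms(2) unfolding conv_comb_slices_eq by blast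
  show ?thesis
    unfolding D using assms(1) c is_slice_subset
    by (intro minkowski_comb_subset_convex) (auto intro: less_imp_le)
qed

lemma diameter_minkowski_comb_sign_flip:
  fixes S S' :: "nat \<Rightarrow> 'a::real_normed_vector set"
  assumes e: "\<forall>i<n. e i = 1 \<or> e i = -1" and S': "\<forall>i<n. (*\<^sub>R) (e i) ` S' i \<subseteq> S i"
    and bounded: "bounded (minkowski_comb n c S)"
  shows "diameter (minkowski_comb n c S') \<le> diameter (minkowski_comb n c S)"
proof (rule diameter_le)
  show "minkowski_comb n c S' \<noteq> {} \<or> 0 \<le> diameter (minkowski_comb n c S)"
    using diameter_ge_0[OF bounded] by blast
  fix x y
  assume "x \<in> minkowski_comb n c S'" "y \<in> minkowski_comb n c S'"
  then obtain s t where x: "x = (\<Sum>i<n. c i *\<^sub>R s i)" "\<forall>i<n. s i \<in> S' i"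
    and y: "y = (\<Sum>i<n. c i *\<^sub>R t i)" "\<forall>i<n. t i \<in> S' i"
    by (auto simp: minkowski_comb_def)
  \<comment> \<open>swap the i-th summands of x and y where e i = -1; this leaves x - y unchanged\<close>
  define u where "u i = e i *\<^sub>R (if e i = 1 then s i else t i)" for i
  define v where "v i = e i *\<^sub>R (if e i = 1 then t i else s i)" for i
  have signed: "e i *\<^sub>R s i \<in> S i \<and> e i *\<^sub>R t i \<in> S i" if "i < n" for i
    using that x(2) y(2) S' by blast
  have "u i \<in> S i \<and> v i \<in> S i" if "i < n" for i
    using signed[OF that] by (cases "e i = 1") (simp_all add: u_def v_def)
  then have uv: "(\<Sum>i<n. c i *\<^sub>R u i) \<in> minkowski_comb n c S"
    "(\<Sum>i<n. c i *\<^sub>R v i) \<in> minkowski_comb n c S"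
    unfolding minkowski_comb_def by blast+
  have "c i *\<^sub>R u i - c i *\<^sub>R v i = c i *\<^sub>R s i - c i *\<^sub>R t i" if "i < n" for i
    using e that unfolding u_def v_def by (auto simp: algebra_simps)
  then have "(\<Sum>i<n. c i *\<^sub>R u i) - (\<Sum>i<n. c i *\<^sub>R v i) = x - y"
    unfolding x y sum_subtractf[symmetric] by (intro sum.cong) auto
  then show "norm (x - y) \<le> diameter (minkowski_comb n c S)"
    using diameter_bounded_bound[OF bounded uv] by (simp add: dist_norm)
qed

lemma convex_hull_Un_negations_subset_cball:
  fixes C :: "'a::real_normed_vector set"
  assumes "C \<subseteq> cball 0 1"
  shows "convex hull (C \<union> uminus ` C) \<subseteq> cball 0 1"
  using assms by (intro hull_minimal) (auto simp: convex_cball)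

lemma diameter_conv_comb_slices_convex_hull_Un_negations:
  fixes C :: "'a::real_normed_vector set"
  assumes "C \<subseteq> cball 0 1" and diam_C: "\<forall>D \<in> conv_comb_slices C. diameter D = 2"
    and D: "D \<in> conv_comb_slices (convex hull (C \<union> uminus ` C))"
  shows "diameter D = 2"
proof -
  have "bounded C"
    using assms(1) bounded_cball bounded_subset by blast
  have D_cball: "D \<subseteq> cball 0 1"
    using conv_comb_slices_subset_convex[OF convex_convex_hull D]
      convex_hull_Un_negations_subset_cball[OF assms(1)] by blast
  then have "bounded D"
    using bounded_cball bounded_subset by blast
  obtain n c S where n: "n \<ge> 1"
    "\<forall>i<n. c i > 0 \<and> is_slice (convex hull (C \<union> uminus ` C)) (S i)" "(\<Sum>i<n. c i) = 1"
    and D_eq: "D = minkowski_comb n c S"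
    using D unfolding conv_comb_slices_eq by blast
  obtain S' e
    where S': "\<forall>i<n. is_slice C (S' i) \<and> (e i = 1 \<or> e i = -1) \<and> (*\<^sub>R) (e i) ` S' i \<subseteq> S i"
  proof -
    have "\<forall>i<n. \<exists>S' e. is_slice C S' \<and> (e = 1 \<or> e = -1) \<and> (*\<^sub>R) e ` S' \<subseteq> S i"
      using signed_slice_subset_slice_convex_hull_Un_negations[OF \<open>bounded C\<close>] n(2) by blast
    then show ?thesis
      using that by metis
  qed
  have "minkowski_comb n c S' \<in> conv_comb_slices C"
    unfolding conv_comb_slices_eq using n S' by blast
  then have "2 = diameter (minkowski_comb n c S')"
    using diam_C by simp
  also have "\<dots> \<le> diameter D"
    using S' \<open>bounded D\<close> unfolding D_eq
    by (intro diameter_minkowski_comb_sign_flip[where e = e]) auto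
  finally have "2 \<le> diameter D" .
  moreover have "diameter D \<le> 2"
  proof (rule diameter_le)
    fix x y
    assume "x \<in> D" "y \<in> D"
    with D_cball have "norm x \<le> 1" "norm y \<le> 1"
      by auto
    then show "norm (x - y) \<le> 2"
      using norm_triangle_ineq4[of x y] by linarith
  qed simp
  ultimately show ?thesis
    by simp
qed

theorem mainTheorem11:
  fixes C :: "('a::banach \<Rightarrow>\<^sub>L real) set"
  assumes "C \<noteq> {}"
    and "convex C"
    and "compactin weak_star_topology C"
    and "C \<subseteq> cball 0 1"
    and "\<forall>D \<in> conv_comb_slices C. diameter D = 2"
  shows "compactin weak_star_topology (convex hull (C \<union> uminus ` C))
       \<and> convex (convex hull (C \<union> uminus ` C))
       \<and> convex hull (C \<union> uminus ` C) \<subseteq> cball 0 1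
       \<and> (\<forall>D \<in> conv_comb_slices (convex hull (C \<union> uminus ` C)). diameter D = 2)"
proof (intro conjI ballI)
  show "compactin weak_star_topology (convex hull (C \<union> uminus ` C))"
    using assms(1-3)
    by (intro compactin_weak_star_convex_hull_Un compactin_weak_star_uminus convex_negations) auto
  show "convex (convex hull (C \<union> uminus ` C))"
    by simp
  show "convex hull (C \<union> uminus ` C) \<subseteq> cball 0 1"
    using assms(4) by (rule convex_hull_Un_negations_subset_cball)
  show "diameter D = 2" if "D \<in> conv_comb_slices (convex hull (C \<union> uminus ` C))" for D
    using assms(4,5) that by (rule diameter_conv_comb_slices_convex_hull_Un_negations)
qed

end
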